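(* Let $\nu$ be a class (ii) distribution with associated functions $f,\varphi,\Phi$, and let $\theta\ge1$. Let $\eta$ be a probability distribution on $[0,\infty)$ with density $g$ such that $g(x)\le1$ for all sufficiently large $x$ and such that $g/f$ is bounded on every compact interval. If $E_\eta[X^\theta]=\int_0^\infty x^\theta g(x)\,dx<\infty$, then $D_{F_\Phi}(\eta|\nu)<\infty$.
   Context: Densities are written $f=e^{-\varphi}$. For strictly convex $F$ with $F(1)=0$, $D_F(\eta|\nu)=\int_0^\infty F(g/f)f\,dx$ if $\eta\ll\nu$ and $+\infty$ otherwise. Class (ii): $\lim_{x\to\infty}\varphi(x)/x=0$, $\lim_{x\to\infty}\varphi(x)/\log x=\infty$, and there exist $\bar x>0$ and $\Phi:\mathbb R_+\to\mathbb R$ positive, strictly concave, twice differentiable and increasing on $[\bar x,\infty)$ such that, with $\Phi^{-1}$ the inverse of $\Phi|_{[\bar x,\infty)}$, $0<\liminf_{x\to\infty}\Phi^{-1}(\varphi(x))/x\le\limsup_{x\to\infty}\Phi^{-1}(\varphi(x))/x<\infty$. With $\bar y=\exp(\Phi(\bar x))$: $F_\Phi(y)=y\log y$ for $y\le\bar y$ and $F_\Phi(y)=a\,y\,\Phi^{-1}(\log y)^\theta+b$ for $y>\bar y$, where $a=\frac{1+\log\bar y}{\Phi^{-1}(\log\bar y)^\theta+\theta\Phi^{-1}(\log\bar y)^{\theta-1}(\Phi^{-1})'(\log\bar y)}$, $b=\bar y\log\bar y-a\bar y\Phi^{-1}(\log\bar y)^\theta$. *)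

theory Defs
  imports "HOL-Analysis.Analysis"
begin

definition Phi_inv :: "(real \<Rightarrow> real) \<Rightarrow> real \<Rightarrow> real \<Rightarrow> real" where
  "Phi_inv \<Phi> xbar = the_inv_into {xbar..} \<Phi>"

text \<open>The function F_Phi.  The argument dinv stands for the value of the derivative
  of Phi_inv at log ybar = Phi xbar (constrained by a hypothesis in the theorem).\<close>
definition F_Phi :: "(real \<Rightarrow> real) \<Rightarrow> real \<Rightarrow> real \<Rightarrow> real \<Rightarrow> real \<Rightarrow> real" where
  "F_Phi \<Phi> xbar \<theta> dinv y =
    (let yb = exp (\<Phi> xbar);
         Pi = Phi_inv \<Phi> xbar;
         a = (1 + ln yb) / (Pi (ln yb) powr \<theta> + \<theta> * Pi (ln yb) powr (\<theta> - 1) * dinv);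
         b = yb * ln yb - a * yb * Pi (ln yb) powr \<theta>
     in if y \<le> yb then y * ln y else a * y * Pi (ln y) powr \<theta> + b)"

end

theory Submission
  imports Defs
begin

text \<open>
  Write \<open>P\<close> for \<open>Phi_inv \<Phi> xbar\<close> and \<open>y = g/f\<close>.  Below the threshold \<open>exp (\<Phi> xbar)\<close> the
  integrand \<open>F(y) f\<close> is bounded by a multiple of \<open>f\<close>; above it, it is \<open>O(g P(ln y)\<^sup>\<theta>)\<close>.
  On a compact interval \<open>y\<close> is bounded, so \<open>P(ln y)\<close> is bounded.  For large \<open>x\<close> we have
  \<open>g \<le> 1\<close>, hence \<open>ln y \<le> \<phi>\<close> and \<open>P(ln y) \<le> P(\<phi> x) = O(x)\<close> by the class (ii) assumption.
  So \<open>|F(y) f|\<close> is dominated by a combination of \<open>f\<close>, \<open>g\<close> and \<open>x\<^sup>\<theta> g\<close>.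
\<close>

lemma abs_mult_ln_le:
  fixes y Y :: real
  assumes "0 \<le> y" "y \<le> Y"
  shows "\<bar>y * ln y\<bar> \<le> 1 + Y\<^sup>2"
proof (cases "y = 0")
  case False
  then have y: "y > 0" using assms by simp
  have "y * ln y \<le> y * (y - 1)"
    using ln_le_minus_one[OF y] y by (simp add: mult_left_mono)
  also have "\<dots> \<le> Y\<^sup>2"
    using assms mult_mono[of y Y y Y] by (simp add: power2_eq_square algebra_simps)
  finally have upper: "y * ln y \<le> Y\<^sup>2" .
  have "- ln y \<le> 1 / y - 1"
    using ln_le_minus_one[of "1 / y"] y by (simp add: ln_div)
  then have "y * (- ln y) \<le> 1 - y"
    using mult_left_mono[of "- ln y" "1 / y - 1" y] y by (simp add: field_simps)
  then have lower: "- (y * ln y) \<le> 1" using y by simp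
  show ?thesis
    unfolding abs_le_iff using upper lower zero_le_power2[of Y] by linarith
qed simp

lemma le_ln_max_exp:
  fixes a w :: real
  shows "a \<le> ln (max w (exp a))"
  by (subst ln_ge_iff) (auto simp: less_max_iff_disj)

lemma ln_ratio_le_if_le_1:
  fixes f g \<phi> :: real
  assumes "f = exp (- \<phi>)" "0 < g" "g \<le> 1"
  shows "ln (g / f) \<le> \<phi>"
proof -
  have "ln (g / f) = ln g + \<phi>" using assms by (simp add: ln_divide_pos)
  then show ?thesis using assms by simp
qed

lemma powr_max_le:
  fixes u v \<theta> :: real
  assumes "0 \<le> u" "0 \<le> v"
  shows "max u v powr \<theta> \<le> u powr \<theta> + v powr \<theta>"
  by (cases "u \<le> v") (auto simp: max_def)

lemma eventually_less_if_Limsup_less_PInf: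
  assumes "Limsup F (\<lambda>x. ereal (h x)) < \<infinity>"
  obtains C :: real where "0 < C" "eventually (\<lambda>x. h x < C) F"
proof -
  obtain n :: nat where "Limsup F (\<lambda>x. ereal (h x)) < ereal (real n)"
    using assms less_PInf_Ex_of_nat by (metis less_irrefl)
  from Limsup_lessD[OF this] have "eventually (\<lambda>x. h x < max (real n) 1) F"
    by (rule eventually_mono) auto
  then show thesis by (intro that) auto
qed

lemma filterlim_at_top_if_ratio_ln:
  fixes \<phi> :: "real \<Rightarrow> real"
  assumes "filterlim (\<lambda>x. \<phi> x / ln x) at_top at_top"
  shows "filterlim \<phi> at_top at_top"
proof (rule filterlim_at_top_mono[OF ln_at_top])
  have "eventually (\<lambda>x. 1 \<le> \<phi> x / ln x) at_top"
    using assms by (simp add: filterlim_at_top)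
  with eventually_gt_at_top[of 1] show "eventually (\<lambda>x. ln x \<le> \<phi> x) at_top"
  proof eventually_elim
    case (elim x)
    then have "0 < ln x" by simp
    with elim show ?case by (simp add: field_simps)
  qed
qed

lemma unbounded_if_eventually_in_image:
  fixes \<phi> :: "real \<Rightarrow> real"
  assumes "filterlim \<phi> at_top at_top" "eventually (\<lambda>x. \<phi> x \<in> \<Phi> ` S) at_top"
  shows "\<exists>u\<in>S. t \<le> \<Phi> u"
proof -
  have "eventually (\<lambda>x. t \<le> \<phi> x \<and> \<phi> x \<in> \<Phi> ` S) at_top"
    using assms by (simp add: filterlim_at_top eventually_conj)
  then obtain x where "t \<le> \<phi> x" "\<phi> x \<in> \<Phi> ` S"
    unfolding eventually_at_top_linorder by blast
  then show ?thesis by auto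
qed

lemma atLeast_subset_image_if_unbounded:
  fixes \<Phi> :: "real \<Rightarrow> real"
  assumes "continuous_on {xbar..} \<Phi>" and "\<And>t. \<exists>u\<in>{xbar..}. t \<le> \<Phi> u"
  shows "{\<Phi> xbar..} \<subseteq> \<Phi> ` {xbar..}"
proof
  fix t assume "t \<in> {\<Phi> xbar..}"
  obtain u where u: "xbar \<le> u" "t \<le> \<Phi> u" using assms(2) by auto
  have "continuous_on {xbar..u} \<Phi>" using assms(1) by (rule continuous_on_subset) auto
  from IVT'[of \<Phi> xbar t u, OF _ u(2) u(1) this] \<open>t \<in> {\<Phi> xbar..}\<close>
  show "t \<in> \<Phi> ` {xbar..}" by auto
qed

lemma Phi_inv_inverse:
  assumes "inj_on \<Phi> {xbar..}" "t \<in> \<Phi> ` {xbar..}"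
  shows "xbar \<le> Phi_inv \<Phi> xbar t" "\<Phi> (Phi_inv \<Phi> xbar t) = t"
  using the_inv_into_into[OF assms order_refl] f_the_inv_into_f[OF assms]
  by (auto simp: Phi_inv_def)

lemma mono_on_Phi_inv:
  assumes "strict_mono_on {xbar..} \<Phi>"
  shows "mono_on (\<Phi> ` {xbar..}) (Phi_inv \<Phi> xbar)"
proof (rule mono_onI)
  fix s t assume st: "s \<in> \<Phi> ` {xbar..}" "t \<in> \<Phi> ` {xbar..}" "s \<le> t"
  have inj: "inj_on \<Phi> {xbar..}" using assms by (rule strict_mono_on_imp_inj_on)
  show "Phi_inv \<Phi> xbar s \<le> Phi_inv \<Phi> xbar t"
  proof (rule ccontr)
    assume "\<not> ?thesis"
    then have "\<Phi> (Phi_inv \<Phi> xbar t) < \<Phi> (Phi_inv \<Phi> xbar s)"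
      using assms Phi_inv_inverse(1)[OF inj st(1)] Phi_inv_inverse(1)[OF inj st(2)]
      by (auto simp: strict_mono_on_def)
    then show False using st Phi_inv_inverse(2)[OF inj] by simp
  qed
qed

lemma Phi_inv_on_atLeast:
  fixes \<Phi> :: "real \<Rightarrow> real"
  assumes "strict_mono_on {xbar..} \<Phi>" "continuous_on {xbar..} \<Phi>" "\<And>t. \<exists>u\<in>{xbar..}. t \<le> \<Phi> u"
  shows "mono_on {\<Phi> xbar..} (Phi_inv \<Phi> xbar)" "\<And>t. \<Phi> xbar \<le> t \<Longrightarrow> xbar \<le> Phi_inv \<Phi> xbar t"
proof -
  have image: "{\<Phi> xbar..} \<subseteq> \<Phi> ` {xbar..}"
    using assms(2,3) by (rule atLeast_subset_image_if_unbounded)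
  show "mono_on {\<Phi> xbar..} (Phi_inv \<Phi> xbar)"
    using mono_on_subset[OF mono_on_Phi_inv[OF assms(1)] image] .
  show "xbar \<le> Phi_inv \<Phi> xbar t" if "\<Phi> xbar \<le> t" for t
    using Phi_inv_inverse(1)[OF strict_mono_on_imp_inj_on[OF assms(1)]] image that by auto
qed

text \<open>\<open>P (ln y)\<close>, with \<open>y\<close> clipped below at the threshold \<open>exp (\<Phi> xbar)\<close> so that the argument of
  \<open>P\<close> stays in \<open>{\<Phi> xbar..}\<close>; this makes it monotone in \<open>y\<close>.\<close>
definition clipped_Phi_inv_ln :: "(real \<Rightarrow> real) \<Rightarrow> real \<Rightarrow> real \<Rightarrow> real" where
  "clipped_Phi_inv_ln \<Phi> xbar y = Phi_inv \<Phi> xbar (ln (max y (exp (\<Phi> xbar))))"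

lemma clipped_Phi_inv_ln_nonneg:
  assumes "\<And>t. \<Phi> xbar \<le> t \<Longrightarrow> 0 \<le> Phi_inv \<Phi> xbar t"
  shows "0 \<le> clipped_Phi_inv_ln \<Phi> xbar y"
  unfolding clipped_Phi_inv_ln_def by (rule assms le_ln_max_exp)+

lemma mono_clipped_Phi_inv_ln:
  assumes "mono_on {\<Phi> xbar..} (Phi_inv \<Phi> xbar)"
  shows "mono (clipped_Phi_inv_ln \<Phi> xbar)"
proof (rule monoI)
  fix y z :: real assume "y \<le> z"
  then have "ln (max y (exp (\<Phi> xbar))) \<le> ln (max z (exp (\<Phi> xbar)))"
    by (subst ln_le_cancel_iff) (auto simp: less_max_iff_disj)
  then show "clipped_Phi_inv_ln \<Phi> xbar y \<le> clipped_Phi_inv_ln \<Phi> xbar z"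
    unfolding clipped_Phi_inv_ln_def by (intro mono_onD[OF assms]) (auto intro: le_ln_max_exp)
qed

lemma F_Phi_eq:
  obtains a b where "F_Phi \<Phi> xbar \<theta> dinv = (\<lambda>y. if y \<le> exp (\<Phi> xbar) then y * ln y
    else a * y * clipped_Phi_inv_ln \<Phi> xbar y powr \<theta> + b)"
proof -
  obtain a b where F: "F_Phi \<Phi> xbar \<theta> dinv = (\<lambda>y. if y \<le> exp (\<Phi> xbar) then y * ln y
      else a * y * Phi_inv \<Phi> xbar (ln y) powr \<theta> + b)"
    unfolding F_Phi_def Let_def by blast
  show thesis by (rule that[of a b]) (auto simp: F fun_eq_iff max_def clipped_Phi_inv_ln_def)
qed

lemma measurable_F_Phi:
  assumes "mono_on {\<Phi> xbar..} (Phi_inv \<Phi> xbar)"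
  shows "F_Phi \<Phi> xbar \<theta> dinv \<in> borel_measurable borel"
proof -
  obtain a b where F: "F_Phi \<Phi> xbar \<theta> dinv = (\<lambda>y. if y \<le> exp (\<Phi> xbar) then y * ln y
      else a * y * clipped_Phi_inv_ln \<Phi> xbar y powr \<theta> + b)"
    using F_Phi_eq by blast
  have [measurable]: "clipped_Phi_inv_ln \<Phi> xbar \<in> borel_measurable borel"
    using mono_clipped_Phi_inv_ln[OF assms] by (rule borel_measurable_mono)
  show ?thesis unfolding F by measurable
qed

lemma F_Phi_growth:
  obtains K A where "0 \<le> K" "0 \<le> A"
    "\<And>y. 0 \<le> y \<Longrightarrow> \<bar>F_Phi \<Phi> xbar \<theta> dinv y\<bar> \<le> K + A * y * clipped_Phi_inv_ln \<Phi> xbar y powr \<theta>"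
proof -
  obtain a b where F: "F_Phi \<Phi> xbar \<theta> dinv = (\<lambda>y. if y \<le> exp (\<Phi> xbar) then y * ln y
      else a * y * clipped_Phi_inv_ln \<Phi> xbar y powr \<theta> + b)"
    using F_Phi_eq by blast
  define K where "K = 1 + (exp (\<Phi> xbar))\<^sup>2 + \<bar>b\<bar>"
  have "\<bar>F_Phi \<Phi> xbar \<theta> dinv y\<bar> \<le> K + \<bar>a\<bar> * y * clipped_Phi_inv_ln \<Phi> xbar y powr \<theta>"
    if "0 \<le> y" for y
  proof (cases "y \<le> exp (\<Phi> xbar)")
    case True
    then show ?thesis
      using abs_mult_ln_le[OF \<open>0 \<le> y\<close> True] \<open>0 \<le> y\<close> by (simp add: F K_def add_increasing2)
  next
    case False
    let ?p = "clipped_Phi_inv_ln \<Phi> xbar y powr \<theta>"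
    have "\<bar>F_Phi \<Phi> xbar \<theta> dinv y\<bar> = \<bar>a * y * ?p + b\<bar>" using False by (simp add: F)
    also have "\<dots> \<le> \<bar>a\<bar> * y * ?p + \<bar>b\<bar>"
      using abs_triangle_ineq[of "a * y * ?p" b] \<open>0 \<le> y\<close> by (simp add: abs_mult)
    also have "\<dots> \<le> K + \<bar>a\<bar> * y * ?p" by (simp add: K_def)
    finally show ?thesis .
  qed
  then show thesis by (intro that[of K "\<bar>a\<bar>"]) (auto simp: K_def)
qed

lemma clipped_Phi_inv_ln_ratio_le:
  fixes f g \<phi> :: "real \<Rightarrow> real" and x N M C :: real
  assumes mono: "mono_on {\<Phi> xbar..} (Phi_inv \<Phi> xbar)"
    and f: "f x = exp (- \<phi> x)"
    and small: "x \<le> N \<Longrightarrow> g x / f x \<le> M"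
    and large: "N \<le> x \<Longrightarrow> g x \<le> 1 \<and> Phi_inv \<Phi> xbar (\<phi> x) \<le> C * x"
  shows "clipped_Phi_inv_ln \<Phi> xbar (g x / f x) \<le> max (clipped_Phi_inv_ln \<Phi> xbar M) (C * x)"
proof (cases "g x / f x \<le> max M (exp (\<Phi> xbar))")
  case True
  have "clipped_Phi_inv_ln \<Phi> xbar (g x / f x) \<le> clipped_Phi_inv_ln \<Phi> xbar (max M (exp (\<Phi> xbar)))"
    using mono_clipped_Phi_inv_ln[OF mono] True by (rule monoD)
  then show ?thesis by (simp add: clipped_Phi_inv_ln_def)
next
  case False
  let ?y = "g x / f x"
  have y: "exp (\<Phi> xbar) < ?y" "M < ?y" using False by auto
  then have "g x \<le> 1" "Phi_inv \<Phi> xbar (\<phi> x) \<le> C * x"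
    using small large by (meson linorder_linear not_le)+
  moreover have "0 < ?y" using y(1) exp_gt_zero[of "\<Phi> xbar"] by linarith
  then have "0 < g x" using f by (simp add: zero_less_divide_iff)
  ultimately have "ln ?y \<le> \<phi> x" using f by (simp add: ln_ratio_le_if_le_1)
  moreover have "\<Phi> xbar \<le> ln ?y" using le_ln_max_exp[of "\<Phi> xbar" ?y] y by (simp add: max_def)
  ultimately have "Phi_inv \<Phi> xbar (ln ?y) \<le> Phi_inv \<Phi> xbar (\<phi> x)"
    by (intro mono_onD[OF mono]) auto
  then show ?thesis
    using y \<open>Phi_inv \<Phi> xbar (\<phi> x) \<le> C * x\<close> by (simp add: clipped_Phi_inv_ln_def max_def)
qed

lemma set_integrable_F_Phi_density_ratio:
  fixes f g :: "real \<Rightarrow> real" and B C \<theta> :: real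
  assumes mono: "mono_on {\<Phi> xbar..} (Phi_inv \<Phi> xbar)"
    and Phi_inv_nonneg: "\<And>t. \<Phi> xbar \<le> t \<Longrightarrow> 0 \<le> Phi_inv \<Phi> xbar t"
    and [measurable]: "f \<in> borel_measurable borel" "g \<in> borel_measurable borel"
    and f_pos: "\<And>x. 0 < f x" and g_nonneg: "\<And>x. 0 \<le> x \<Longrightarrow> 0 \<le> g x"
    and integrable: "set_integrable lborel {0..} f" "set_integrable lborel {0..} g"
      "set_integrable lborel {0..} (\<lambda>x. x powr \<theta> * g x)"
    and "0 \<le> \<theta>" "0 \<le> B" "0 \<le> C"
    and ratio: "\<And>x. 0 \<le> x \<Longrightarrow> clipped_Phi_inv_ln \<Phi> xbar (g x / f x) \<le> max B (C * x)"
  shows "set_integrable lborel {0..} (\<lambda>x. F_Phi \<Phi> xbar \<theta> dinv (g x / f x) * f x)"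
proof -
  have [measurable]: "F_Phi \<Phi> xbar \<theta> dinv \<in> borel_measurable borel"
    using mono by (rule measurable_F_Phi)
  obtain K A where "0 \<le> K" "0 \<le> A" and growth: "\<And>y. 0 \<le> y \<Longrightarrow>
      \<bar>F_Phi \<Phi> xbar \<theta> dinv y\<bar> \<le> K + A * y * clipped_Phi_inv_ln \<Phi> xbar y powr \<theta>"
    using F_Phi_growth by blast
  define D where "D x = K * f x + (A * B powr \<theta>) * g x + (A * C powr \<theta>) * (x powr \<theta> * g x)" for x
  have dominated: "\<bar>F_Phi \<Phi> xbar \<theta> dinv (g x / f x) * f x\<bar> \<le> D x" if "0 \<le> x" for x
  proof -
    let ?R = "clipped_Phi_inv_ln \<Phi> xbar (g x / f x)"
    have "?R powr \<theta> \<le> max B (C * x) powr \<theta>"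
      using clipped_Phi_inv_ln_nonneg[OF Phi_inv_nonneg] ratio[OF that] \<open>0 \<le> \<theta>\<close>
      by (rule powr_mono2[rotated])
    also have "\<dots> \<le> B powr \<theta> + C powr \<theta> * x powr \<theta>"
      using powr_max_le[of B "C * x" \<theta>] \<open>0 \<le> B\<close> \<open>0 \<le> C\<close> that by (simp add: powr_mult)
    finally have R: "?R powr \<theta> \<le> B powr \<theta> + C powr \<theta> * x powr \<theta>" .
    have "0 \<le> g x / f x" using f_pos[of x] g_nonneg[OF that] by simp
    then have "\<bar>F_Phi \<Phi> xbar \<theta> dinv (g x / f x) * f x\<bar> \<le> (K + A * (g x / f x) * ?R powr \<theta>) * f x"
      using growth[of "g x / f x"] f_pos[of x] by (simp add: abs_mult)
    also have "\<dots> = K * f x + A * g x * ?R powr \<theta>" using f_pos[of x] by (simp add: field_simps)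
    also have "\<dots> \<le> K * f x + A * g x * (B powr \<theta> + C powr \<theta> * x powr \<theta>)"
      using R \<open>0 \<le> A\<close> g_nonneg[OF that] by (simp add: mult_left_mono)
    also have "\<dots> = D x" by (simp add: D_def algebra_simps)
    finally show ?thesis .
  qed
  have "set_integrable lborel {0..} D"
    unfolding D_def using integrable by (intro set_integral_add set_integrable_mult_right) auto
  then show ?thesis
  proof (rule set_integrable_bound)
    show "set_borel_measurable lborel {0..} (\<lambda>x. F_Phi \<Phi> xbar \<theta> dinv (g x / f x) * f x)"
      unfolding set_borel_measurable_def by measurable
    show "AE x in lborel. x \<in> {0..} \<longrightarrow> norm (F_Phi \<Phi> xbar \<theta> dinv (g x / f x) * f x) \<le> norm (D x)"
    proof (intro AE_I2 impI)
      fix x :: real assume "x \<in> {0..}"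
      then have "\<bar>F_Phi \<Phi> xbar \<theta> dinv (g x / f x) * f x\<bar> \<le> D x" by (simp add: dominated)
      then show "norm (F_Phi \<Phi> xbar \<theta> dinv (g x / f x) * f x) \<le> norm (D x)"
        using abs_ge_self[of "D x"] by (simp only: real_norm_def)
    qed
  qed
qed

theorem proposition4p4:
  fixes \<phi> f g \<Phi> \<Phi>' \<Phi>'' :: "real \<Rightarrow> real" and xbar \<theta> dinv :: real
  assumes f_def: "\<And>x. f x = exp (- \<phi> x)"
    and \<phi>_meas: "\<phi> \<in> borel_measurable borel"
    and f_prob: "set_integrable lborel {0..} f" "(\<integral>x\<in>{0..}. f x \<partial>lborel) = 1"
    and \<phi>_lin: "((\<lambda>x. \<phi> x / x) \<longlongrightarrow> 0) at_top"
    and \<phi>_log: "filterlim (\<lambda>x. \<phi> x / ln x) at_top at_top"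
    and xbar_pos: "xbar > 0"
    and \<Phi>_pos: "\<And>x. x \<ge> xbar \<Longrightarrow> \<Phi> x > 0"
    and \<Phi>_strict_concave: "\<And>x y t. x \<ge> xbar \<Longrightarrow> y \<ge> xbar \<Longrightarrow> x \<noteq> y \<Longrightarrow> 0 < t \<Longrightarrow> t < 1 \<Longrightarrow>
          \<Phi> ((1 - t) * x + t * y) > (1 - t) * \<Phi> x + t * \<Phi> y"
    and \<Phi>_deriv: "\<And>x. x \<ge> xbar \<Longrightarrow> (\<Phi> has_real_derivative \<Phi>' x) (at x within {xbar..})"
    and \<Phi>_deriv2: "\<And>x. x \<ge> xbar \<Longrightarrow> (\<Phi>' has_real_derivative \<Phi>'' x) (at x within {xbar..})"
    and \<Phi>_incr: "strict_mono_on {xbar..} \<Phi>"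
    and \<phi>_range: "eventually (\<lambda>x. \<phi> x \<in> \<Phi> ` {xbar..}) at_top"
    and liminf_pos: "Liminf at_top (\<lambda>x. ereal (Phi_inv \<Phi> xbar (\<phi> x) / x)) > 0"
    and limsup_fin: "Limsup at_top (\<lambda>x. ereal (Phi_inv \<Phi> xbar (\<phi> x) / x)) < \<infinity>"
    and dinv: "(Phi_inv \<Phi> xbar has_real_derivative dinv) (at (\<Phi> xbar) within {\<Phi> xbar..})"
    and \<theta>: "\<theta> \<ge> 1"
    and g_meas: "g \<in> borel_measurable borel"
    and g_nonneg: "\<And>x. x \<ge> 0 \<Longrightarrow> g x \<ge> 0"
    and g_prob: "set_integrable lborel {0..} g" "(\<integral>x\<in>{0..}. g x \<partial>lborel) = 1"
    and g_le1: "eventually (\<lambda>x. g x \<le> 1) at_top"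
    and gf_bdd: "\<And>c. \<exists>M. \<forall>x\<in>{0..c}. g x / f x \<le> M"
    and moment: "set_integrable lborel {0..} (\<lambda>x. x powr \<theta> * g x)"
  shows "set_integrable lborel {0..} (\<lambda>x. F_Phi \<Phi> xbar \<theta> dinv (g x / f x) * f x)"
proof -
  have "continuous_on {xbar..} \<Phi>" by (rule DERIV_continuous_on) (use \<Phi>_deriv in auto)
  from Phi_inv_on_atLeast[OF \<Phi>_incr this
      unbounded_if_eventually_in_image[OF filterlim_at_top_if_ratio_ln[OF \<phi>_log] \<phi>_range]]
  have mono: "mono_on {\<Phi> xbar..} (Phi_inv \<Phi> xbar)"
    and Phi_inv_nonneg: "\<And>t. \<Phi> xbar \<le> t \<Longrightarrow> 0 \<le> Phi_inv \<Phi> xbar t"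
    using xbar_pos by (auto intro: order_trans[OF less_imp_le])
  obtain C where "0 < C" and linear: "eventually (\<lambda>x. Phi_inv \<Phi> xbar (\<phi> x) / x < C) at_top"
    using limsup_fin by (rule eventually_less_if_Limsup_less_PInf)
  have "eventually (\<lambda>x. g x \<le> 1 \<and> Phi_inv \<Phi> xbar (\<phi> x) \<le> C * x) at_top"
    using g_le1 linear eventually_gt_at_top[of 0] by eventually_elim (simp add: divide_less_eq)
  then obtain N where N: "\<And>x. N \<le> x \<Longrightarrow> g x \<le> 1 \<and> Phi_inv \<Phi> xbar (\<phi> x) \<le> C * x"
    unfolding eventually_at_top_linorder by blast
  obtain M where M: "\<forall>x\<in>{0..N}. g x / f x \<le> M" using gf_bdd by blast
  have ratio: "clipped_Phi_inv_ln \<Phi> xbar (g x / f x) \<le> max (clipped_Phi_inv_ln \<Phi> xbar M) (C * x)"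
    if "0 \<le> x" for x
    using M N that by (intro clipped_Phi_inv_ln_ratio_le[OF mono, where N = N and \<phi> = \<phi>] f_def) auto
  have f_meas: "f \<in> borel_measurable borel" using \<phi>_meas by (simp add: f_def[abs_def])
  show ?thesis
  proof (rule set_integrable_F_Phi_density_ratio[OF mono Phi_inv_nonneg f_meas g_meas _ g_nonneg
        f_prob(1) g_prob(1) moment _ clipped_Phi_inv_ln_nonneg[OF Phi_inv_nonneg] _ ratio])
    show "0 < f x" for x by (simp add: f_def)
  qed (use \<theta> \<open>0 < C\<close> in auto)
qed

end
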